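(* For every natural number $m$, $$s(m)=\left|\{\sigma\in S_\infty:\ \mathcal{LF}_2(\sigma)=m\}\right|.$$
   Context: $S_n$ is the group of permutations of $[n]=\{1,\dots,n\}$. For $\sigma\in S_n$ and $i\in[n]$, $c_i(\sigma)=|\{j\in[n]: j>i,\ \sigma(j)<\sigma(i)\}|$, $k_i(\sigma)=c_{n-i}(\sigma)$ for $i=0,\dots,n-1$, and $\mathcal{LF}_2(\sigma)=\sum_{i=0}^{n-1}[2^i-2^{i-k_i(\sigma)}]$. Let $\iota_n:S_n\to S_{n+1}$, $\iota_n(\sigma)=(1,\sigma(1)+1,\dots,\sigma(n)+1)$; it preserves $\mathcal{LF}_2$. Here $S_\infty$ is the direct limit of $(S_n,\iota_n)_{n\ge1}$ (which is isomorphic to the group of finitely supported permutations of the positive integers), and $\mathcal{LF}_2$ is the induced function on $S_\infty$. For $m>0$ and $k\ge0$, $S_k(m)$ is the set of all sequences $((m_1,l_1),\dots,(m_t,l_t))$, $t\ge1$, of pairs of natural numbers with $k=m_1>m_2>\dots>m_t\ge0$, $m_j\ge l_j\ge0$, and $m=\sum_{j=1}^t\sum_{p=0}^{l_j}2^{m_j-p}$; $s_k(m)=|S_k(m)|$ (nonzero for only finitely many $k$), $s(m)=\sum_{k=0}^\infty s_k(m)$ for $m>0$, and $s(0)=1$. *)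

theory Defs
  imports "HOL-Combinatorics.Permutations"
begin

definition Sn :: "nat \<Rightarrow> (nat \<Rightarrow> nat) set" where
  "Sn n = {\<sigma>. \<sigma> permutes {1..n}}"

definition cc :: "nat \<Rightarrow> (nat \<Rightarrow> nat) \<Rightarrow> nat \<Rightarrow> nat" where
  "cc n \<sigma> i = card {j \<in> {1..n}. j > i \<and> \<sigma> j < \<sigma> i}"

definition kk :: "nat \<Rightarrow> (nat \<Rightarrow> nat) \<Rightarrow> nat \<Rightarrow> nat" where
  "kk n \<sigma> i = cc n \<sigma> (n - i)"

definition LF2 :: "nat \<Rightarrow> (nat \<Rightarrow> nat) \<Rightarrow> nat" where
  "LF2 n \<sigma> = (\<Sum>i<n. (2 ^ i - 2 ^ (i - kk n \<sigma> i)))"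

definition iota :: "nat \<Rightarrow> (nat \<Rightarrow> nat) \<Rightarrow> (nat \<Rightarrow> nat)" where
  "iota n \<sigma> = (\<lambda>j. if j = 1 then 1 else if 2 \<le> j \<and> j \<le> n + 1 then \<sigma> (j - 1) + 1 else j)"

fun iota_iter :: "nat \<Rightarrow> nat \<Rightarrow> (nat \<Rightarrow> nat) \<Rightarrow> (nat \<Rightarrow> nat)" where
  "iota_iter 0 n \<sigma> = \<sigma>"
| "iota_iter (Suc d) n \<sigma> = iota (n + d) (iota_iter d n \<sigma>)"

text \<open>Direct limit of (S_n, iota_n)_{n>=1}: equivalence classes of pairs (n, sigma), sigma in S_n.\<close>
definition limrel :: "((nat \<times> (nat \<Rightarrow> nat)) \<times> (nat \<times> (nat \<Rightarrow> nat))) set" where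
  "limrel = {((n, \<sigma>), (n', \<sigma>')). n \<ge> 1 \<and> n' \<ge> 1 \<and> \<sigma> \<in> Sn n \<and> \<sigma>' \<in> Sn n' \<and>
      (\<exists>N. N \<ge> n \<and> N \<ge> n' \<and> iota_iter (N - n) n \<sigma> = iota_iter (N - n') n' \<sigma>')}"

definition S_inf :: "(nat \<times> (nat \<Rightarrow> nat)) set set" where
  "S_inf = (SIGMA n:{1..}. Sn n) // limrel"

definition LF2_inf :: "(nat \<times> (nat \<Rightarrow> nat)) set \<Rightarrow> nat" where
  "LF2_inf X = the_elem ((\<lambda>(n, \<sigma>). LF2 n \<sigma>) ` X)"

definition Sk :: "nat \<Rightarrow> nat \<Rightarrow> (nat \<times> nat) list set" where
  "Sk k m = {ps. ps \<noteq> [] \<and> fst (hd ps) = k \<and> sorted_wrt (\<lambda>a b. fst a > fst b) ps \<and>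
      (\<forall>(mj, lj) \<in> set ps. lj \<le> mj) \<and>
      m = (\<Sum>(mj, lj) \<leftarrow> ps. \<Sum>p = 0..lj. 2 ^ (mj - p))}"

definition sk :: "nat \<Rightarrow> nat \<Rightarrow> nat" where
  "sk k m = card (Sk k m)"

definition s :: "nat \<Rightarrow> nat" where
  "s m = (if m = 0 then 1 else (\<Sum>k \<in> {k. sk k m \<noteq> 0}. sk k m))"

end

theory Submission
  imports Defs
begin

(* Reading the inversion counts from the right, k_i(sigma) = c_(n-i)(sigma) is the Lehmer code:
   it identifies S_n with the sequences satisfying k_i <= i that vanish from n on.  The embedding
   iota_n only appends a zero to the code, so S_infinity is identified with the finitely supported
   sequences with k_i <= i, and LF_2 becomes the sum of 2^i - 2^(i - k_i) over the i with k_i > 0.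
   Such a term equals 2^(i-1) + 2^(i-2) + ... + 2^(i-k_i), a run of k_i binary digits, so listing
   the pairs (i - 1, k_i - 1) in decreasing order of i is a bijection onto the sequences counted
   by s(m): those starting with k form S_k(m), and the empty sequence accounts for m = 0. *)

section \<open>Lehmer codes of permutations\<close>

lemma cc_le: "cc n \<sigma> j \<le> n - j"
proof -
  have "cc n \<sigma> j \<le> card {j<..n}"
    unfolding cc_def by (intro card_mono) auto
  then show ?thesis by simp
qed

lemma cc_eq_card_smaller_values:
  assumes "\<sigma> permutes {1..n}" and "i \<in> {1..n}"
  shows "cc n \<sigma> i = card {v \<in> \<sigma> ` {j \<in> {1..n}. i \<le> j}. v < \<sigma> i}"
proof -
  have "{v \<in> \<sigma> ` {j \<in> {1..n}. i \<le> j}. v < \<sigma> i} = \<sigma> ` {j \<in> {1..n}. i < j \<and> \<sigma> j < \<sigma> i}"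
    using assms(2) by (auto simp: le_less)
  then show ?thesis
    unfolding cc_def using permutes_inj_on[OF assms(1)] by (simp add: card_image)
qed

lemma permutes_eq_if_cc_eq:
  assumes \<sigma>: "\<sigma> permutes {1..n}" and \<tau>: "\<tau> permutes {1..n}"
    and cc_eq: "\<And>j. j \<in> {1..n} \<Longrightarrow> cc n \<sigma> j = cc n \<tau> j"
  shows "\<sigma> = \<tau>"
proof (rule ccontr)
  assume "\<sigma> \<noteq> \<tau>"
  then have ex: "\<exists>i. \<sigma> i \<noteq> \<tau> i" by auto
  define i where "i = (LEAST i. \<sigma> i \<noteq> \<tau> i)"
  have ne: "\<sigma> i \<noteq> \<tau> i"
    unfolding i_def by (rule LeastI_ex[OF ex])
  have before: "\<sigma> ` {j \<in> {1..n}. j < i} = \<tau> ` {j \<in> {1..n}. j < i}"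
    unfolding i_def using not_less_Least by (auto intro!: image_cong)
  have i: "i \<in> {1..n}"
    using ne \<sigma> \<tau> by (metis permutes_not_in)
  have from_i: "\<pi> ` {j \<in> {1..n}. i \<le> j} = {1..n} - \<pi> ` {j \<in> {1..n}. j < i}"
    if "\<pi> permutes {1..n}" for \<pi>
  proof -
    have "{j \<in> {1..n}. i \<le> j} = {1..n} - {j \<in> {1..n}. j < i}" by auto
    then show ?thesis
      using image_set_diff[OF permutes_inj[OF that]] permutes_image[OF that] by simp
  qed
  \<comment> \<open>At the first disagreement i both permutations take the same set of values from i on,
    and cc at i is the rank of the value at i within that set.\<close>
  let ?V = "\<sigma> ` {j \<in> {1..n}. i \<le> j}"
  have V: "?V = \<tau> ` {j \<in> {1..n}. i \<le> j}"
    unfolding from_i[OF \<sigma>] from_i[OF \<tau>] before ..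
  have in_V: "\<sigma> i \<in> ?V" "\<tau> i \<in> ?V"
    using i by (simp, unfold V, simp)
  have "cc n \<tau> i = card {v \<in> ?V. v < \<tau> i}"
    unfolding V by (rule cc_eq_card_smaller_values[OF \<tau> i])
  then have ranks: "card {v \<in> ?V. v < \<sigma> i} = card {v \<in> ?V. v < \<tau> i}"
    using cc_eq[OF i] cc_eq_card_smaller_values[OF \<sigma> i] by simp
  have rank_mono: "card {v \<in> ?V. v < a} < card {v \<in> ?V. v < b}" if "a \<in> ?V" "a < b" for a b
    by (rule psubset_card_mono) (use that in auto)
  from ne consider "\<sigma> i < \<tau> i" | "\<tau> i < \<sigma> i"
    by linarith
  then show False
    using ranks rank_mono[OF in_V(1), of "\<tau> i"] rank_mono[OF in_V(2), of "\<sigma> i"] by cases auto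
qed

lemma bij_betw_cc_PiE:
  "bij_betw (\<lambda>\<sigma>. restrict (cc n \<sigma>) {1..n}) {\<sigma>. \<sigma> permutes {1..n}} (\<Pi>\<^sub>E j\<in>{1..n}. {..n - j})"
proof -
  let ?code = "\<lambda>\<sigma>. restrict (cc n \<sigma>) {1..n}"
  have inj: "inj_on ?code {\<sigma>. \<sigma> permutes {1..n}}"
  proof (rule inj_onI)
    fix \<sigma> \<tau> assume "\<sigma> \<in> {\<sigma>. \<sigma> permutes {1..n}}" "\<tau> \<in> {\<sigma>. \<sigma> permutes {1..n}}"
      and "?code \<sigma> = ?code \<tau>"
    then show "\<sigma> = \<tau>"
      by (metis mem_Collect_eq permutes_eq_if_cc_eq restrict_apply')
  qed
  have card_perms: "card {\<sigma>. \<sigma> permutes {1..n}} = fact n"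
    by (rule card_permutations) auto
  have "card (\<Pi>\<^sub>E j\<in>{1..n}. {..n - j}) = (\<Prod>j = 1..n. n + 1 - j)"
    by (simp add: card_PiE Suc_diff_le)
  also have "\<dots> = fact n"
    using prod.atLeastAtMost_rev[of "\<lambda>i. i" 1 n] by (simp add: fact_prod)
  finally have "card (\<Pi>\<^sub>E j\<in>{1..n}. {..n - j}) = card (?code ` {\<sigma>. \<sigma> permutes {1..n}})"
    using card_image[OF inj] card_perms by simp
  moreover have "?code ` {\<sigma>. \<sigma> permutes {1..n}} \<subseteq> (\<Pi>\<^sub>E j\<in>{1..n}. {..n - j})"
    using cc_le by auto
  ultimately show ?thesis
    unfolding bij_betw_def using inj by (metis card_subset_eq finite_PiE finite_atLeastAtMost finite_atMost)
qed

lemma iota_eq_map_permutation: "iota n \<sigma> = map_permutation {1..n} Suc \<sigma>"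
proof
  fix j
  have "inv_into {1..n} Suc (Suc i) = i" if "i \<in> {1..n}" for i
    using that by (simp add: inv_into_f_eq)
  then show "iota n \<sigma> j = map_permutation {1..n} Suc \<sigma> j"
    by (cases j) (auto simp: iota_def map_permutation_def restrict_id_def)
qed

lemma permutes_iota: "\<sigma> permutes {1..n} \<Longrightarrow> iota n \<sigma> permutes {1..Suc n}"
  unfolding iota_eq_map_permutation
  by (rule permutes_subset[OF map_permutation_permutes[where B = "{2..Suc n}"]]) auto

lemma permutes_iota_iter: "\<sigma> permutes {1..n} \<Longrightarrow> iota_iter d n \<sigma> permutes {1..n + d}"
proof (induction d)
  case (Suc d)
  then show ?case
    using permutes_iota[of "iota_iter d n \<sigma>" "n + d"] by simp
qed simp

lemma cc_iota_Suc:
  assumes "j \<in> {1..n}"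
  shows "cc (Suc n) (iota n \<sigma>) (Suc j) = cc n \<sigma> j"
proof -
  have "{j' \<in> {1..Suc n}. Suc j < j' \<and> iota n \<sigma> j' < iota n \<sigma> (Suc j)}
      = Suc ` {j' \<in> {1..n}. j < j' \<and> \<sigma> j' < \<sigma> j}"
    using assms by (auto simp: iota_def image_iff Suc_le_eq gr0_conv_Suc)
  then show ?thesis
    unfolding cc_def by (simp add: card_image)
qed

lemma cc_iota_1: "cc (Suc n) (iota n \<sigma>) 1 = 0"
  unfolding cc_def by (auto simp: iota_def)

definition lehmer :: "nat \<Rightarrow> (nat \<Rightarrow> nat) \<Rightarrow> nat \<Rightarrow> nat" where
  "lehmer n \<sigma> i = (if i < n then kk n \<sigma> i else 0)"

lemma lehmer_iota: "lehmer (Suc n) (iota n \<sigma>) = lehmer n \<sigma>"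
proof
  fix i
  show "lehmer (Suc n) (iota n \<sigma>) i = lehmer n \<sigma> i"
  proof (cases "i < n")
    case True
    then have "Suc n - i = Suc (n - i)" "n - i \<in> {1..n}" by auto
    then show ?thesis
      using True by (simp add: lehmer_def kk_def cc_iota_Suc)
  next
    case False
    then show ?thesis
      using cc_iota_1[of n \<sigma>] by (cases "i = n") (simp_all add: lehmer_def kk_def)
  qed
qed

lemma lehmer_iota_iter: "lehmer (n + d) (iota_iter d n \<sigma>) = lehmer n \<sigma>"
  by (induction d) (simp_all add: lehmer_iota)

lemma lehmer_le: "lehmer n \<sigma> i \<le> i"
  unfolding lehmer_def kk_def using cc_le[of n \<sigma> "n - i"] by auto

lemma permutes_eq_if_lehmer_eq:
  assumes "\<sigma> permutes {1..n}" "\<tau> permutes {1..n}" "lehmer n \<sigma> = lehmer n \<tau>"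
  shows "\<sigma> = \<tau>"
proof (rule permutes_eq_if_cc_eq[OF assms(1,2)])
  fix j assume "j \<in> {1..n}"
  then have "n - j < n" "n - (n - j) = j" by auto
  then show "cc n \<sigma> j = cc n \<tau> j"
    using fun_cong[OF assms(3), of "n - j"] by (simp add: lehmer_def kk_def)
qed

lemma exists_permutes_lehmer_eq:
  assumes le: "\<And>i. k i \<le> i" and zero: "\<And>i. n \<le> i \<Longrightarrow> k i = 0"
  shows "\<exists>\<sigma>. \<sigma> permutes {1..n} \<and> lehmer n \<sigma> = k"
proof -
  have "restrict (\<lambda>j. k (n - j)) {1..n} \<in> (\<Pi>\<^sub>E j\<in>{1..n}. {..n - j})"
    using le by auto
  then obtain \<sigma> where \<sigma>: "\<sigma> permutes {1..n}"
    and cc: "restrict (cc n \<sigma>) {1..n} = restrict (\<lambda>j. k (n - j)) {1..n}"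
    using bij_betw_cc_PiE[of n] unfolding bij_betw_def by (metis (no_types, lifting) imageE mem_Collect_eq)
  have "lehmer n \<sigma> i = k i" for i
  proof (cases "i < n")
    case True
    then have "n - i \<in> {1..n}" "n - (n - i) = i" by auto
    then show ?thesis
      using fun_cong[OF cc, of "n - i"] True by (simp add: lehmer_def kk_def)
  qed (simp add: lehmer_def zero)
  with \<sigma> show ?thesis by blast
qed

section \<open>The direct limit\<close>

lemma quotient_kernel_on_eq:
  "A // {(x, y). x \<in> A \<and> y \<in> A \<and> f x = f y} = (\<lambda>c. {x \<in> A. f x = c}) ` f ` A"
proof -
  have "{(x, y). x \<in> A \<and> y \<in> A \<and> f x = f y} `` {x} = {y \<in> A. f y = f x}" if "x \<in> A" for x
    using that by auto
  then show ?thesis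
    unfolding quotient_def image_image UNION_singleton_eq_range by (simp cong: image_cong)
qed

lemma bij_betw_quotient_kernel_on:
  "bij_betw (\<lambda>X. the_elem (f ` X)) (A // {(x, y). x \<in> A \<and> y \<in> A \<and> f x = f y}) (f ` A)"
  unfolding quotient_kernel_on_eq
proof (rule bij_betw_byWitness[where f' = "\<lambda>c. {x \<in> A. f x = c}"])
  have image_class: "f ` {x \<in> A. f x = c} = {c}" if "c \<in> f ` A" for c
    using that by auto
  then show "\<forall>X \<in> (\<lambda>c. {x \<in> A. f x = c}) ` f ` A. {x \<in> A. f x = the_elem (f ` X)} = X"
    by auto
  show "\<forall>c \<in> f ` A. the_elem (f ` {x \<in> A. f x = c}) = c"
    using image_class by simp
  show "(\<lambda>X. the_elem (f ` X)) ` (\<lambda>c. {x \<in> A. f x = c}) ` f ` A \<subseteq> f ` A"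
    using image_class by auto
qed auto

lemma image_quotient_kernel_on_singleton:
  assumes "X \<in> A // {(x, y). x \<in> A \<and> y \<in> A \<and> f x = f y}"
  shows "\<exists>c. f ` X = {c}"
proof -
  obtain c where "c \<in> f ` A" "X = {x \<in> A. f x = c}"
    using assms unfolding quotient_kernel_on_eq by blast
  then have "f ` X = {c}" by auto
  then show ?thesis ..
qed

abbreviation Sn_pairs :: "(nat \<times> (nat \<Rightarrow> nat)) set" where
  "Sn_pairs \<equiv> SIGMA n:{1..}. Sn n"

lemma limrel_iff:
  "((n, \<sigma>), (n', \<sigma>')) \<in> limrel \<longleftrightarrow>
     (n, \<sigma>) \<in> Sn_pairs \<and> (n', \<sigma>') \<in> Sn_pairs \<and> lehmer n \<sigma> = lehmer n' \<sigma>'"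
proof
  assume "((n, \<sigma>), (n', \<sigma>')) \<in> limrel"
  then obtain N where "n \<ge> 1" "n' \<ge> 1" "\<sigma> \<in> Sn n" "\<sigma>' \<in> Sn n'" "N \<ge> n" "N \<ge> n'"
    and eq: "iota_iter (N - n) n \<sigma> = iota_iter (N - n') n' \<sigma>'"
    unfolding limrel_def by blast
  moreover have "lehmer n \<sigma> = lehmer n' \<sigma>'"
    using lehmer_iota_iter[of n "N - n" \<sigma>] lehmer_iota_iter[of n' "N - n'" \<sigma>'] eq \<open>N \<ge> n\<close> \<open>N \<ge> n'\<close>
    by simp
  ultimately show "(n, \<sigma>) \<in> Sn_pairs \<and> (n', \<sigma>') \<in> Sn_pairs \<and> lehmer n \<sigma> = lehmer n' \<sigma>'"
    by simp
next
  assume "(n, \<sigma>) \<in> Sn_pairs \<and> (n', \<sigma>') \<in> Sn_pairs \<and> lehmer n \<sigma> = lehmer n' \<sigma>'"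
  then have n: "n \<ge> 1" "n' \<ge> 1" and \<sigma>: "\<sigma> permutes {1..n}" "\<sigma>' permutes {1..n'}"
    and eq: "lehmer n \<sigma> = lehmer n' \<sigma>'"
    by (auto simp: Sn_def)
  define N where "N = max n n'"
  have "iota_iter (N - n) n \<sigma> = iota_iter (N - n') n' \<sigma>'"
  proof (rule permutes_eq_if_lehmer_eq)
    show "iota_iter (N - n) n \<sigma> permutes {1..N}" "iota_iter (N - n') n' \<sigma>' permutes {1..N}"
      using permutes_iota_iter[OF \<sigma>(1), of "N - n"] permutes_iota_iter[OF \<sigma>(2), of "N - n'"]
      by (simp_all add: N_def)
    show "lehmer N (iota_iter (N - n) n \<sigma>) = lehmer N (iota_iter (N - n') n' \<sigma>')"
      using lehmer_iota_iter[of n "N - n" \<sigma>] lehmer_iota_iter[of n' "N - n'" \<sigma>'] eq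
      by (simp add: N_def)
  qed
  then show "((n, \<sigma>), (n', \<sigma>')) \<in> limrel"
    unfolding limrel_def using n \<sigma> by (auto simp: Sn_def N_def intro!: exI[of _ N])
qed

lemma limrel_eq_lehmer_kernel:
  "limrel = {(x, y). x \<in> Sn_pairs \<and> y \<in> Sn_pairs \<and> case_prod lehmer x = case_prod lehmer y}"
  by (auto simp: limrel_iff)

definition lehmer_weight :: "(nat \<Rightarrow> nat) \<Rightarrow> nat" where
  "lehmer_weight k = (\<Sum>i | k i \<noteq> 0. 2 ^ i - 2 ^ (i - k i))"

lemma LF2_eq_lehmer_weight: "LF2 n \<sigma> = lehmer_weight (lehmer n \<sigma>)"
proof -
  have "LF2 n \<sigma> = (\<Sum>i<n. 2 ^ i - 2 ^ (i - lehmer n \<sigma> i))"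
    unfolding LF2_def lehmer_def by simp
  also have "\<dots> = lehmer_weight (lehmer n \<sigma>)"
    unfolding lehmer_weight_def
    by (rule sum.mono_neutral_right) (auto simp: lehmer_def split: if_splits)
  finally show ?thesis .
qed

definition lehmer_codes :: "(nat \<Rightarrow> nat) set" where
  "lehmer_codes = {k. (\<forall>i. k i \<le> i) \<and> finite {i. k i \<noteq> 0}}"

lemma lehmer_image_Sn_pairs: "case_prod lehmer ` Sn_pairs = lehmer_codes"
proof (intro equalityI subsetI)
  fix k assume "k \<in> case_prod lehmer ` Sn_pairs"
  then obtain n \<sigma> where k: "k = lehmer n \<sigma>" by auto
  have "{i. k i \<noteq> 0} \<subseteq> {..<n}"
    unfolding k lehmer_def by auto
  then have "finite {i. k i \<noteq> 0}"
    by (rule finite_subset) simp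
  then show "k \<in> lehmer_codes"
    unfolding lehmer_codes_def k by (simp add: lehmer_le)
next
  fix k assume k: "k \<in> lehmer_codes"
  then obtain b where "\<And>i. k i \<noteq> 0 \<Longrightarrow> i \<le> b"
    unfolding lehmer_codes_def finite_nat_set_iff_bounded_le by blast
  then have "\<And>i. Suc b \<le> i \<Longrightarrow> k i = 0"
    by (meson not_less_eq_eq)
  then obtain \<sigma> where "\<sigma> permutes {1..Suc b}" "lehmer (Suc b) \<sigma> = k"
    using exists_permutes_lehmer_eq k unfolding lehmer_codes_def by blast
  then show "k \<in> case_prod lehmer ` Sn_pairs"
    by (intro image_eqI[of _ _ "(Suc b, \<sigma>)"]) (simp_all add: Sn_def)
qed

lemma LF2_inf_eq_lehmer_weight:
  assumes "X \<in> S_inf"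
  shows "LF2_inf X = lehmer_weight (the_elem (case_prod lehmer ` X))"
proof -
  have LF2_comp: "(\<lambda>(n, \<sigma>). LF2 n \<sigma>) = lehmer_weight \<circ> case_prod lehmer"
    by (simp add: fun_eq_iff LF2_eq_lehmer_weight)
  obtain c where c: "case_prod lehmer ` X = {c}"
    using assms image_quotient_kernel_on_singleton[of X Sn_pairs "case_prod lehmer"]
    unfolding S_inf_def limrel_eq_lehmer_kernel by blast
  show ?thesis
    unfolding LF2_inf_def LF2_comp image_comp[symmetric] c by simp
qed

lemma bij_betw_S_inf_lehmer_codes:
  "bij_betw (\<lambda>X. the_elem (case_prod lehmer ` X))
     {X \<in> S_inf. LF2_inf X = m} {k \<in> lehmer_codes. lehmer_weight k = m}"
proof (rule bij_betw_Collect)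
  show "bij_betw (\<lambda>X. the_elem (case_prod lehmer ` X)) S_inf lehmer_codes"
    using bij_betw_quotient_kernel_on[of "case_prod lehmer" Sn_pairs]
    unfolding S_inf_def limrel_eq_lehmer_kernel lehmer_image_Sn_pairs .
qed (simp add: LF2_inf_eq_lehmer_weight)

section \<open>Runs of binary digits\<close>

lemma strict_sorted_rev_map_fst:
  "sorted_wrt (\<lambda>a b. fst a > fst b) ps \<Longrightarrow> sorted_wrt (<) (rev (map fst ps))"
  by (simp add: sorted_wrt_rev sorted_wrt_map)

lemma distinct_map_fst_if_sorted_wrt:
  fixes ps :: "('a::linorder \<times> 'b) list"
  assumes "sorted_wrt (\<lambda>a b. fst a > fst b) ps"
  shows "distinct (map fst ps)"
  using strict_sorted_rev_map_fst[OF assms] by (simp add: strict_sorted_iff)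

lemma sorted_wrt_fst_set_unique:
  fixes xs ys :: "('a::linorder \<times> 'b) list"
  assumes "sorted_wrt (\<lambda>a b. fst a > fst b) xs" "sorted_wrt (\<lambda>a b. fst a > fst b) ys"
    and "set xs = set ys"
  shows "xs = ys"
proof -
  have "inj_on fst (set (rev xs) \<union> set (rev ys))"
    using assms(1,3) distinct_map_fst_if_sorted_wrt[of xs] by (simp add: distinct_map)
  then have "rev xs = rev ys"
    using assms strict_sorted_rev_map_fst[of xs] strict_sorted_rev_map_fst[of ys]
    by (intro map_sorted_distinct_set_unique[of fst]) (simp_all add: rev_map strict_sorted_iff)
  then show ?thesis by simp
qed

lemma sum_power2_diff_down:
  "l \<le> a \<Longrightarrow> (\<Sum>p = 0..l. (2::nat) ^ (a - p)) = 2 ^ Suc a - 2 ^ (a - l)"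
proof (induction l)
  case (Suc l)
  have "(2::nat) ^ (a - l) = 2 * 2 ^ (a - Suc l)"
    using Suc.prems by (simp flip: power_Suc)
  moreover have "(2::nat) ^ (a - l) \<le> 2 ^ Suc a"
    by (rule power_increasing) auto
  ultimately show ?case
    using Suc by simp
qed simp

definition run_lists :: "(nat \<times> nat) list set" where
  "run_lists = {ps. sorted_wrt (\<lambda>a b. fst a > fst b) ps \<and> (\<forall>(mj, lj) \<in> set ps. lj \<le> mj)}"

definition runs_sum :: "(nat \<times> nat) list \<Rightarrow> nat" where
  "runs_sum ps = (\<Sum>(mj, lj) \<leftarrow> ps. \<Sum>p = 0..lj. 2 ^ (mj - p))"

lemma Sk_eq: "Sk k m = {ps \<in> run_lists. ps \<noteq> [] \<and> fst (hd ps) = k \<and> runs_sum ps = m}"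
  unfolding Sk_def run_lists_def runs_sum_def by auto

definition runs_of_lehmer :: "(nat \<Rightarrow> nat) \<Rightarrow> (nat \<times> nat) list" where
  "runs_of_lehmer k = map (\<lambda>i. (i - 1, k i - 1)) (rev (sorted_list_of_set {i. k i \<noteq> 0}))"

fun lehmer_of_runs :: "(nat \<times> nat) list \<Rightarrow> nat \<Rightarrow> nat" where
  "lehmer_of_runs ps 0 = 0"
| "lehmer_of_runs ps (Suc j) = case_option 0 Suc (map_of ps j)"

lemma set_runs_of_lehmer:
  "finite {i. k i \<noteq> 0} \<Longrightarrow> set (runs_of_lehmer k) = (\<lambda>i. (i - 1, k i - 1)) ` {i. k i \<noteq> 0}"
  unfolding runs_of_lehmer_def by simp

lemma runs_of_lehmer_in_run_lists:
  assumes "k \<in> lehmer_codes"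
  shows "runs_of_lehmer k \<in> run_lists"
proof -
  have fin: "finite {i. k i \<noteq> 0}" and le: "\<And>i. k i \<le> i"
    using assms unfolding lehmer_codes_def by auto
  have "sorted_wrt (\<lambda>x y. y - 1 < x - 1) (rev (sorted_list_of_set {i. k i \<noteq> 0}))"
    unfolding sorted_wrt_rev
  proof (rule sorted_wrt_mono_rel[OF _ sorted_list_of_set.strict_sorted_key_list_of_set])
    fix x y assume "x \<in> set (sorted_list_of_set {i. k i \<noteq> 0})" "x < y"
    moreover have "x \<noteq> 0" if "k x \<noteq> 0"
      using le[of x] that by auto
    ultimately show "x - 1 < y - 1"
      using fin by simp
  qed
  then have "sorted_wrt (\<lambda>a b. fst a > fst b) (runs_of_lehmer k)"
    unfolding runs_of_lehmer_def sorted_wrt_map by simp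
  moreover have "\<forall>(mj, lj) \<in> set (runs_of_lehmer k). lj \<le> mj"
    using le unfolding set_runs_of_lehmer[OF fin] by (auto simp: diff_le_mono)
  ultimately show ?thesis
    unfolding run_lists_def by simp
qed

lemma lehmer_of_runs_in_lehmer_codes:
  assumes "ps \<in> run_lists"
  shows "lehmer_of_runs ps \<in> lehmer_codes"
proof -
  have distinct: "distinct (map fst ps)"
    using assms distinct_map_fst_if_sorted_wrt unfolding run_lists_def by blast
  have "lehmer_of_runs ps i \<le> i" for i
  proof (cases i)
    case (Suc j)
    show ?thesis
    proof (cases "map_of ps j")
      case (Some l)
      then have "(j, l) \<in> set ps"
        using distinct by simp
      then have "l \<le> j"
        using assms unfolding run_lists_def by auto
      then show ?thesis
        using Suc Some by simp
    qed (simp add: Suc)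
  qed simp
  moreover have "{i. lehmer_of_runs ps i \<noteq> 0} \<subseteq> Suc ` fst ` set ps"
  proof
    fix i assume "i \<in> {i. lehmer_of_runs ps i \<noteq> 0}"
    then obtain j where "i = Suc j" "map_of ps j \<noteq> None"
      by (cases i) (auto split: option.splits)
    then show "i \<in> Suc ` fst ` set ps"
      by (simp add: map_of_eq_None_iff)
  qed
  then have "finite {i. lehmer_of_runs ps i \<noteq> 0}"
    by (rule finite_subset) simp
  ultimately show ?thesis
    unfolding lehmer_codes_def by simp
qed

lemma lehmer_of_runs_of_lehmer:
  assumes k: "k \<in> lehmer_codes"
  shows "lehmer_of_runs (runs_of_lehmer k) = k"
proof
  fix i
  have fin: "finite {i. k i \<noteq> 0}" and le: "\<And>i. k i \<le> i"
    using k unfolding lehmer_codes_def by auto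
  have distinct: "distinct (map fst (runs_of_lehmer k))"
    using runs_of_lehmer_in_run_lists[OF k] distinct_map_fst_if_sorted_wrt
    unfolding run_lists_def by blast
  show "lehmer_of_runs (runs_of_lehmer k) i = k i"
  proof (cases i)
    case 0
    then show ?thesis using le[of 0] by simp
  next
    case (Suc j)
    show ?thesis
    proof (cases "k i = 0")
      case True
      have "j \<notin> fst ` set (runs_of_lehmer k)"
      proof
        assume "j \<in> fst ` set (runs_of_lehmer k)"
        then obtain i' where "k i' \<noteq> 0" "i' - 1 = j"
          unfolding set_runs_of_lehmer[OF fin] by auto
        moreover have "i' \<noteq> 0"
          using le[of i'] \<open>k i' \<noteq> 0\<close> by auto
        ultimately have "i' = i"
          using Suc by simp
        then show False
          using True \<open>k i' \<noteq> 0\<close> by simp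
      qed
      then have "map_of (runs_of_lehmer k) j = None"
        by (simp add: map_of_eq_None_iff)
      then show ?thesis
        using True Suc by simp
    next
      case False
      then have "(j, k i - 1) \<in> set (runs_of_lehmer k)"
        unfolding set_runs_of_lehmer[OF fin] using Suc by (intro image_eqI[of _ _ i]) simp_all
      then have "map_of (runs_of_lehmer k) j = Some (k i - 1)"
        using distinct by simp
      then show ?thesis
        using False Suc by simp
    qed
  qed
qed

lemma runs_of_lehmer_of_runs:
  assumes ps: "ps \<in> run_lists"
  shows "runs_of_lehmer (lehmer_of_runs ps) = ps"
proof (rule sorted_wrt_fst_set_unique)
  have distinct: "distinct (map fst ps)"
    using ps distinct_map_fst_if_sorted_wrt unfolding run_lists_def by blast
  have codes: "lehmer_of_runs ps \<in> lehmer_codes"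
    using ps by (rule lehmer_of_runs_in_lehmer_codes)
  then have fin: "finite {i. lehmer_of_runs ps i \<noteq> 0}"
    unfolding lehmer_codes_def by simp
  show "sorted_wrt (\<lambda>a b. fst a > fst b) (runs_of_lehmer (lehmer_of_runs ps))"
    using runs_of_lehmer_in_run_lists[OF codes] unfolding run_lists_def by simp
  show "sorted_wrt (\<lambda>a b. fst a > fst b) ps"
    using ps unfolding run_lists_def by simp
  show "set (runs_of_lehmer (lehmer_of_runs ps)) = set ps"
  proof (intro equalityI subsetI)
    fix z assume "z \<in> set (runs_of_lehmer (lehmer_of_runs ps))"
    then obtain i where i: "lehmer_of_runs ps i \<noteq> 0" "z = (i - 1, lehmer_of_runs ps i - 1)"
      unfolding set_runs_of_lehmer[OF fin] by auto
    then obtain j l where "i = Suc j" "map_of ps j = Some l"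
      by (cases i) (auto split: option.splits)
    with i show "z \<in> set ps"
      by (simp add: map_of_SomeD)
  next
    fix z assume z: "z \<in> set ps"
    obtain j l where jl: "z = (j, l)"
      by fastforce
    then have "map_of ps j = Some l"
      using z distinct by simp
    then show "z \<in> set (runs_of_lehmer (lehmer_of_runs ps))"
      unfolding set_runs_of_lehmer[OF fin] jl by (intro image_eqI[of _ _ "Suc j"]) simp_all
  qed
qed

lemma runs_sum_runs_of_lehmer:
  assumes k: "k \<in> lehmer_codes"
  shows "runs_sum (runs_of_lehmer k) = lehmer_weight k"
proof -
  have fin: "finite {i. k i \<noteq> 0}" and le: "\<And>i. k i \<le> i"
    using k unfolding lehmer_codes_def by auto
  define run where "run = (\<lambda>(mj, lj). \<Sum>p = 0..lj. (2::nat) ^ (mj - p))"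
  define pair where "pair = (\<lambda>i. (i - 1, k i - 1))"
  have "runs_sum (runs_of_lehmer k) = sum_list (map (run \<circ> pair) (sorted_list_of_set {i. k i \<noteq> 0}))"
    unfolding runs_sum_def runs_of_lehmer_def run_def pair_def
    by (simp add: rev_map[symmetric] sum_list_rev comp_def)
  also have "\<dots> = (\<Sum>i | k i \<noteq> 0. (run \<circ> pair) i)"
    using fin by (simp add: sum_list_distinct_conv_sum_set)
  also have "\<dots> = lehmer_weight k"
    unfolding lehmer_weight_def
  proof (rule sum.cong[OF refl])
    fix i assume "i \<in> {i. k i \<noteq> 0}"
    then have "k i - 1 \<le> i - 1" "Suc (i - 1) = i" "i - 1 - (k i - 1) = i - k i"
      using le[of i] by auto
    then show "(run \<circ> pair) i = 2 ^ i - 2 ^ (i - k i)"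
      unfolding run_def pair_def using sum_power2_diff_down[of "k i - 1" "i - 1"] by simp
  qed
  finally show ?thesis .
qed

lemma bij_betw_lehmer_codes_run_lists:
  "bij_betw runs_of_lehmer {k \<in> lehmer_codes. lehmer_weight k = m} {ps \<in> run_lists. runs_sum ps = m}"
proof (rule bij_betw_byWitness[where f' = lehmer_of_runs])
  show "\<forall>k \<in> {k \<in> lehmer_codes. lehmer_weight k = m}. lehmer_of_runs (runs_of_lehmer k) = k"
    by (simp add: lehmer_of_runs_of_lehmer)
  show "\<forall>ps \<in> {ps \<in> run_lists. runs_sum ps = m}. runs_of_lehmer (lehmer_of_runs ps) = ps"
    by (simp add: runs_of_lehmer_of_runs)
  show "runs_of_lehmer ` {k \<in> lehmer_codes. lehmer_weight k = m} \<subseteq> {ps \<in> run_lists. runs_sum ps = m}"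
    by (auto simp: runs_of_lehmer_in_run_lists runs_sum_runs_of_lehmer)
  show "lehmer_of_runs ` {ps \<in> run_lists. runs_sum ps = m} \<subseteq> {k \<in> lehmer_codes. lehmer_weight k = m}"
    using lehmer_of_runs_in_lehmer_codes runs_sum_runs_of_lehmer runs_of_lehmer_of_runs
    by fastforce
qed

section \<open>Counting\<close>

lemma le_power2_diff:
  assumes "1 \<le> k" "k \<le> i"
  shows "i \<le> (2::nat) ^ i - 2 ^ (i - k)"
proof -
  obtain j where j: "i = Suc j"
    using assms by (cases i) auto
  have "(2::nat) ^ (i - k) \<le> 2 ^ j"
    using assms j by (intro power_increasing) auto
  moreover have "Suc j \<le> 2 ^ j"
    by (rule Suc_leI[OF less_exp])
  moreover have "(2::nat) ^ i = 2 * 2 ^ j"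
    using j by simp
  ultimately show ?thesis
    using j by linarith
qed

lemma le_lehmer_weight:
  assumes "k \<in> lehmer_codes" "k i \<noteq> 0"
  shows "i \<le> lehmer_weight k"
proof -
  have "i \<le> 2 ^ i - 2 ^ (i - k i)"
    using assms unfolding lehmer_codes_def by (intro le_power2_diff) auto
  also have "\<dots> \<le> lehmer_weight k"
    unfolding lehmer_weight_def
    by (rule member_le_sum) (use assms in \<open>auto simp: lehmer_codes_def\<close>)
  finally show ?thesis .
qed

lemma finite_lehmer_codes_weight: "finite {k \<in> lehmer_codes. lehmer_weight k = m}"
proof (rule finite_subset)
  show "{k \<in> lehmer_codes. lehmer_weight k = m}
      \<subseteq> {k. \<forall>i. (i \<in> {..m} \<longrightarrow> k i \<in> {..m}) \<and> (i \<notin> {..m} \<longrightarrow> k i = 0)}"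
  proof (intro subsetI CollectI allI)
    fix k i assume k: "k \<in> {k \<in> lehmer_codes. lehmer_weight k = m}"
    then have "k i \<noteq> 0 \<Longrightarrow> i \<le> m" "k i \<le> i"
      using le_lehmer_weight[of k i] unfolding lehmer_codes_def by auto
    then show "(i \<in> {..m} \<longrightarrow> k i \<in> {..m}) \<and> (i \<notin> {..m} \<longrightarrow> k i = 0)"
      by fastforce
  qed
  show "finite {k. \<forall>i. (i \<in> {..m} \<longrightarrow> k i \<in> {..m}) \<and> (i \<notin> {..m} \<longrightarrow> k i = (0::nat))}"
    by (rule finite_set_of_finite_funs) auto
qed

lemma runs_sum_Cons: "runs_sum (p # ps) = (\<Sum>q = 0..snd p. 2 ^ (fst p - q)) + runs_sum ps"
  unfolding runs_sum_def by (cases p) simp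

lemma power2_hd_le_runs_sum:
  assumes "ps \<noteq> []"
  shows "2 ^ fst (hd ps) \<le> runs_sum ps"
proof -
  obtain p ps' where ps: "ps = p # ps'"
    using assms by (cases ps) auto
  have "(2::nat) ^ (fst p - 0) \<le> (\<Sum>q = 0..snd p. 2 ^ (fst p - q))"
    by (rule member_le_sum) auto
  then show ?thesis
    unfolding ps runs_sum_Cons by simp
qed

lemma le_if_in_Sk: "ps \<in> Sk k m \<Longrightarrow> k \<le> m"
proof -
  assume "ps \<in> Sk k m"
  then have "2 ^ k \<le> m"
    using power2_hd_le_runs_sum[of ps] unfolding Sk_eq by auto
  then show "k \<le> m"
    using less_exp[of k] by linarith
qed

lemma run_lists_sum_eq_UN_Sk:
  assumes "m \<noteq> 0"
  shows "{ps \<in> run_lists. runs_sum ps = m} = (\<Union>k \<le> m. Sk k m)"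
proof (intro equalityI subsetI)
  fix ps assume ps: "ps \<in> {ps \<in> run_lists. runs_sum ps = m}"
  then have "ps \<noteq> []"
    using assms by (auto simp: runs_sum_def)
  then have "ps \<in> Sk (fst (hd ps)) m"
    using ps unfolding Sk_eq by simp
  then show "ps \<in> (\<Union>k \<le> m. Sk k m)"
    using le_if_in_Sk by blast
qed (auto simp: Sk_eq)

lemma s_eq_card_run_lists:
  assumes fin: "finite {ps \<in> run_lists. runs_sum ps = m}"
  shows "s m = card {ps \<in> run_lists. runs_sum ps = m}"
proof (cases "m = 0")
  case True
  have "{ps \<in> run_lists. runs_sum ps = 0} = {[]}"
  proof (intro equalityI subsetI)
    fix ps assume "ps \<in> {ps \<in> run_lists. runs_sum ps = 0}"
    then show "ps \<in> {[]}"
      using power2_hd_le_runs_sum[of ps] by (cases "ps = []") auto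
  qed (simp add: run_lists_def runs_sum_def)
  with True show ?thesis
    by (simp add: s_def)
next
  case False
  have "card {ps \<in> run_lists. runs_sum ps = m} = (\<Sum>k \<le> m. sk k m)"
    unfolding run_lists_sum_eq_UN_Sk[OF False] sk_def
  proof (rule card_UN_disjoint)
    show "\<forall>k \<in> {..m}. finite (Sk k m)"
      using fin by (auto simp: Sk_eq elim: finite_subset[rotated])
  qed (auto simp: Sk_eq)
  also have "\<dots> = (\<Sum>k \<in> {k. sk k m \<noteq> 0}. sk k m)"
  proof (rule sum.mono_neutral_right)
    show "{k. sk k m \<noteq> 0} \<subseteq> {..m}"
    proof
      fix k assume "k \<in> {k. sk k m \<noteq> 0}"
      then have "Sk k m \<noteq> {}"
        unfolding sk_def by auto
      then show "k \<in> {..m}"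
        using le_if_in_Sk by blast
    qed
  qed auto
  finally show ?thesis
    using False by (simp add: s_def)
qed

theorem theorem4p5:
  fixes m :: nat
  shows "finite {X \<in> S_inf. LF2_inf X = m} \<and> s m = card {X \<in> S_inf. LF2_inf X = m}"
proof -
  note S_inf_to_codes = bij_betw_S_inf_lehmer_codes[of m]
  note codes_to_runs = bij_betw_lehmer_codes_run_lists[of m]
  have "finite {X \<in> S_inf. LF2_inf X = m}"
    using bij_betw_finite[OF S_inf_to_codes] finite_lehmer_codes_weight by blast
  moreover have "finite {ps \<in> run_lists. runs_sum ps = m}"
    using bij_betw_finite[OF codes_to_runs] finite_lehmer_codes_weight by blast
  moreover have "card {X \<in> S_inf. LF2_inf X = m} = card {ps \<in> run_lists. runs_sum ps = m}"
    using bij_betw_same_card[OF S_inf_to_codes] bij_betw_same_card[OF codes_to_runs] by simp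
  ultimately show ?thesis
    using s_eq_card_run_lists by simp
qed

end
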